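(* Let $M$ be an $H_v$-module over an $H_v$-ring $R$, $T$ an idempotent interval $t$-norm and $S$ an idempotent interval $s$-norm. If $A=(\widetilde{M}_A,\widetilde{N}_A)$ is an interval valued intuitionistic $(S,T)$-fuzzy $H_v$-submodule of $M$, then $A/\varepsilon^*=(\widetilde{M}_{\varepsilon^*},\widetilde{N}_{\varepsilon^*})$ is an interval valued intuitionistic $(S,T)$-fuzzy submodule of the fundamental module $M/\varepsilon^*$ (over the fundamental ring $R/\gamma^*$).
   Context: For a set $H$, $P^*(H)$ denotes the non-empty subsets of $H$; a hyperoperation is a map $H\times H\to P^*(H)$, and for $A,B\subseteq H$, $A\cdot B=\bigcup_{a\in A,b\in B}a\cdot b$. An $H_v$-semigroup is $(H,\cdot)$ with $(x\cdot(y\cdot z))\cap((x\cdot y)\cdot z)\neq\emptyset$ for all $x,y,z$; an $H_v$-group is an $H_v$-semigroup with $a\cdot H=H\cdot a=H$ for all $a\in H$; it is weak commutative if $x\cdot y\cap y\cdot x\ne\emptyset$ for all $x,y$. An $H_v$-ring is $(R,+,\cdot)$ with $(R,+)$ an $H_v$-group, $(R,\cdot)$ an $H_v$-semigroup, and $(x\cdot(y+z))\cap(x\cdot y+x\cdot z)\ne\emptyset$, $((x+y)\cdot z)\cap(x\cdot z+y\cdot z)\ne\emptyset$ for all $x,y,z$. An $H_v$-module over an $H_v$-ring $R$ is a non-empty set $M$ with $(M,+)$ a weak commutative $H_v$-group and a map $\cdot:R\times M\to P^*(M)$ such that for all $a,b\in R$, $x,y\in M$: $(a\cdot(x+y))\cap(a\cdot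 x+a\cdot y)\ne\emptyset$, $((a+b)\cdot x)\cap(a\cdot x+b\cdot x)\ne\emptyset$, $((a\cdot b)\cdot x)\cap(a\cdot(b\cdot x))\ne\emptyset$. Fundamental relations: $\gamma^*$ is the smallest equivalence relation on $R$ such that $R/\gamma^*$ is a ring, and $\varepsilon^*$ is the smallest equivalence relation on $M$ such that $M/\varepsilon^*$ is a module over $R/\gamma^*$, with operations $\varepsilon^*(x)\oplus\varepsilon^*(y)=\varepsilon^*(c)$ for any $c\in\varepsilon^*(x)+\varepsilon^*(y)$ and $\gamma^*(r)\odot\varepsilon^*(x)=\varepsilon^*(d)$ for any $d\in\gamma^*(r)\cdot\varepsilon^*(x)$ (equivalently, $\varepsilon^*$ is the transitive closure of the relation $x\,\varepsilon\,y\iff\{x,y\}\subseteq u$ for some finite expression $u$ built from the hyperoperations of $R$ and $M$ and the external hyperoperation). $\omega_M$ denotes the zero element of $(M/\varepsilon^*,\oplus)$ (the core of $M$). $D[0,1]$ is the set of intervals $[a^-,a^+]$ with $0\le a^-\le a^+\le 1$, ordered componentwise; infima and suprema of families are taken componentwise. A map $\delta:[0,1]^2\to[0,1]$ that is commutative, associative, idempotent and monotone is an idempotent $t$-norm if $\delta(x,1)=x$ for all $x$, and an idempotent $s$-norm if $\delta(1,1)=1$ and $\delta(x,0)=x$ for all $x$. An idempotent interval $t$-norm (resp. $s$-norm) is a map $D[0,1]^2\to D[0,1]$, $([a_1^-,a_1^+],[a_2^-,a_2^+])\mapsto[\delta(a_1^-,a_2^-),\delta(a_1^+,a_2^+)]$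 with $\delta$ an idempotent $t$-norm (resp. $s$-norm). An interval valued intuitionistic fuzzy set on $X$ is a pair $A=(\widetilde{M}_A,\widetilde{N}_A)$ of maps $X\to D[0,1]$ with $\sup\widetilde{M}_A(x)+\sup\widetilde{N}_A(x)\le1$ for all $x$. $A=(\widetilde{M}_A,\widetilde{N}_A)$ on $M$ is an interval valued intuitionistic $(S,T)$-fuzzy $H_v$-submodule if: (1) $T(\widetilde{M}_A(x),\widetilde{M}_A(y))\le\inf_{\alpha\in x+y}\widetilde{M}_A(\alpha)$ and $S(\widetilde{N}_A(x),\widetilde{N}_A(y))\ge\sup_{\alpha\in x+y}\widetilde{N}_A(\alpha)$ for all $x,y$; (2) for all $x,a\in M$ there is $y$ with $x\in a+y$, $T(\widetilde{M}_A(x),\widetilde{M}_A(a))\le\widetilde{M}_A(y)$, $S(\widetilde{N}_A(x),\widetilde{N}_A(a))\ge\widetilde{N}_A(y)$; (3) for all $x,a\in M$ there is $z$ with $x\in z+a$, $T(\widetilde{M}_A(x),\widetilde{M}_A(a))\le\widetilde{M}_A(z)$, $S(\widetilde{N}_A(x),\widetilde{N}_A(a))\ge\widetilde{N}_A(z)$; (4) $\widetilde{M}_A(x)\le\inf_{\alpha\in r\cdot x}\widetilde{M}_A(\alpha)$ and $\widetilde{N}_A(x)\ge\sup_{\alpha\in r\cdot x}\widetilde{N}_A(\alpha)$ for all $x\in M$, $r\in R$. $A/\varepsilon^*=(\widetilde{M}_{\varepsilon^*},\widetilde{N}_{\varepsilon^*})$ with $\widetilde{M}_{\varepsilon^*},\widetilde{N}_{\varepsilon^*}:M/\varepsilon^*\to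 D[0,1]$ defined by $\widetilde{M}_{\varepsilon^*}(\varepsilon^*(x))=\sup_{a\in\varepsilon^*(x)}\widetilde{M}_A(a)$ and $\widetilde{N}_{\varepsilon^*}(\varepsilon^*(x))=\inf_{a\in\varepsilon^*(x)}\widetilde{N}_A(a)$ if $\varepsilon^*(x)\ne\omega_M$, and $\widetilde{M}_{\varepsilon^*}(\omega_M)=[1,1]$, $\widetilde{N}_{\varepsilon^*}(\omega_M)=[0,0]$. For an ordinary module $M'$ over a ring $R'$, an interval valued intuitionistic fuzzy set $A'=(\widetilde{M}_{A'},\widetilde{N}_{A'})$ on $M'$ is an interval valued intuitionistic $(S,T)$-fuzzy submodule if: (i) $\widetilde{M}_{A'}(0)=[1,1]$ and $\widetilde{N}_{A'}(0)=[0,0]$; (ii) $T(\widetilde{M}_{A'}(x),\widetilde{M}_{A'}(y))\le\widetilde{M}_{A'}(x-y)$ and $S(\widetilde{N}_{A'}(x),\widetilde{N}_{A'}(y))\ge\widetilde{N}_{A'}(x-y)$ for all $x,y\in M'$; (iii) $\widetilde{M}_{A'}(x)\le\widetilde{M}_{A'}(r x)$ and $\widetilde{N}_{A'}(x)\ge\widetilde{N}_{A'}(r x)$ for all $x\in M'$, $r\in R'$. *)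

theory Defs
  imports Complex_Main
begin

section \<open>Hyperoperations and H_v-structures (carrier = the whole type)\<close>

definition setop :: "('a \<Rightarrow> 'b \<Rightarrow> 'c set) \<Rightarrow> 'a set \<Rightarrow> 'b set \<Rightarrow> 'c set" where
  "setop f A B = (\<Union>a\<in>A. \<Union>b\<in>B. f a b)"

definition hyperop :: "('a \<Rightarrow> 'b \<Rightarrow> 'c set) \<Rightarrow> bool" where
  "hyperop f \<longleftrightarrow> (\<forall>x y. f x y \<noteq> {})"

definition hv_semigroup :: "('a \<Rightarrow> 'a \<Rightarrow> 'a set) \<Rightarrow> bool" where
  "hv_semigroup f \<longleftrightarrow> hyperop f \<and>
     (\<forall>x y z. setop f {x} (f y z) \<inter> setop f (f x y) {z} \<noteq> {})"

definition hv_group :: "('a \<Rightarrow> 'a \<Rightarrow> 'a set) \<Rightarrow> bool" where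
  "hv_group f \<longleftrightarrow> hv_semigroup f \<and>
     (\<forall>a. setop f {a} UNIV = UNIV \<and> setop f UNIV {a} = UNIV)"

definition weak_comm :: "('a \<Rightarrow> 'a \<Rightarrow> 'a set) \<Rightarrow> bool" where
  "weak_comm f \<longleftrightarrow> (\<forall>x y. f x y \<inter> f y x \<noteq> {})"

definition hv_ring :: "('r \<Rightarrow> 'r \<Rightarrow> 'r set) \<Rightarrow> ('r \<Rightarrow> 'r \<Rightarrow> 'r set) \<Rightarrow> bool" where
  "hv_ring add mul \<longleftrightarrow> hv_group add \<and> hv_semigroup mul \<and>
     (\<forall>x y z. setop mul {x} (add y z) \<inter> setop add (mul x y) (mul x z) \<noteq> {}) \<and>
     (\<forall>x y z. setop mul (add x y) {z} \<inter> setop add (mul x z) (mul y z) \<noteq> {})"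

definition hv_module ::
  "('r \<Rightarrow> 'r \<Rightarrow> 'r set) \<Rightarrow> ('r \<Rightarrow> 'r \<Rightarrow> 'r set) \<Rightarrow>
   ('m \<Rightarrow> 'm \<Rightarrow> 'm set) \<Rightarrow> ('r \<Rightarrow> 'm \<Rightarrow> 'm set) \<Rightarrow> bool" where
  "hv_module addR mulR addM smul \<longleftrightarrow>
     hv_ring addR mulR \<and> hv_group addM \<and> weak_comm addM \<and> hyperop smul \<and>
     (\<forall>a x y. setop smul {a} (addM x y) \<inter> setop addM (smul a x) (smul a y) \<noteq> {}) \<and>
     (\<forall>a b x. setop smul (addR a b) {x} \<inter> setop addM (smul a x) (smul b x) \<noteq> {}) \<and>
     (\<forall>a b x. setop smul (mulR a b) {x} \<inter> setop smul {a} (smul b x) \<noteq> {})"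

text \<open>Values of finite expressions built from the hyperoperations of R.\<close>
inductive_set rexp :: "('r \<Rightarrow> 'r \<Rightarrow> 'r set) \<Rightarrow> ('r \<Rightarrow> 'r \<Rightarrow> 'r set) \<Rightarrow> 'r set set"
  for addR mulR where
  rexp_single: "{r} \<in> rexp addR mulR"
| rexp_add: "A \<in> rexp addR mulR \<Longrightarrow> B \<in> rexp addR mulR \<Longrightarrow> setop addR A B \<in> rexp addR mulR"
| rexp_mul: "A \<in> rexp addR mulR \<Longrightarrow> B \<in> rexp addR mulR \<Longrightarrow> setop mulR A B \<in> rexp addR mulR"

text \<open>Values of finite M-valued expressions built from the hyperoperations of R, M
  and the external hyperoperation.\<close>
inductive_set mexp ::
  "('r \<Rightarrow> 'r \<Rightarrow> 'r set) \<Rightarrow> ('r \<Rightarrow> 'r \<Rightarrow> 'r set) \<Rightarrow>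
   ('m \<Rightarrow> 'm \<Rightarrow> 'm set) \<Rightarrow> ('r \<Rightarrow> 'm \<Rightarrow> 'm set) \<Rightarrow> 'm set set"
  for addR mulR addM smul where
  mexp_single: "{x} \<in> mexp addR mulR addM smul"
| mexp_add: "A \<in> mexp addR mulR addM smul \<Longrightarrow> B \<in> mexp addR mulR addM smul \<Longrightarrow>
     setop addM A B \<in> mexp addR mulR addM smul"
| mexp_smul: "A \<in> rexp addR mulR \<Longrightarrow> B \<in> mexp addR mulR addM smul \<Longrightarrow>
     setop smul A B \<in> mexp addR mulR addM smul"

definition gamma_rel :: "('r \<Rightarrow> 'r \<Rightarrow> 'r set) \<Rightarrow> ('r \<Rightarrow> 'r \<Rightarrow> 'r set) \<Rightarrow> 'r \<Rightarrow> 'r \<Rightarrow> bool" where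
  "gamma_rel addR mulR x y \<longleftrightarrow> (\<exists>u\<in>rexp addR mulR. x \<in> u \<and> y \<in> u)"

definition gamma_star :: "('r \<Rightarrow> 'r \<Rightarrow> 'r set) \<Rightarrow> ('r \<Rightarrow> 'r \<Rightarrow> 'r set) \<Rightarrow> 'r \<Rightarrow> 'r \<Rightarrow> bool" where
  "gamma_star addR mulR = (gamma_rel addR mulR)\<^sup>*\<^sup>*"

definition eps_rel ::
  "('r \<Rightarrow> 'r \<Rightarrow> 'r set) \<Rightarrow> ('r \<Rightarrow> 'r \<Rightarrow> 'r set) \<Rightarrow>
   ('m \<Rightarrow> 'm \<Rightarrow> 'm set) \<Rightarrow> ('r \<Rightarrow> 'm \<Rightarrow> 'm set) \<Rightarrow> 'm \<Rightarrow> 'm \<Rightarrow> bool" where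
  "eps_rel addR mulR addM smul x y \<longleftrightarrow> (\<exists>u\<in>mexp addR mulR addM smul. x \<in> u \<and> y \<in> u)"

definition eps_star ::
  "('r \<Rightarrow> 'r \<Rightarrow> 'r set) \<Rightarrow> ('r \<Rightarrow> 'r \<Rightarrow> 'r set) \<Rightarrow>
   ('m \<Rightarrow> 'm \<Rightarrow> 'm set) \<Rightarrow> ('r \<Rightarrow> 'm \<Rightarrow> 'm set) \<Rightarrow> 'm \<Rightarrow> 'm \<Rightarrow> bool" where
  "eps_star addR mulR addM smul = (eps_rel addR mulR addM smul)\<^sup>*\<^sup>*"

definition gamma_class :: "('r \<Rightarrow> 'r \<Rightarrow> 'r set) \<Rightarrow> ('r \<Rightarrow> 'r \<Rightarrow> 'r set) \<Rightarrow> 'r \<Rightarrow> 'r set" where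
  "gamma_class addR mulR r = {s. gamma_star addR mulR r s}"

definition fund_ring :: "('r \<Rightarrow> 'r \<Rightarrow> 'r set) \<Rightarrow> ('r \<Rightarrow> 'r \<Rightarrow> 'r set) \<Rightarrow> 'r set set" where
  "fund_ring addR mulR = range (gamma_class addR mulR)"

definition eps_class ::
  "('r \<Rightarrow> 'r \<Rightarrow> 'r set) \<Rightarrow> ('r \<Rightarrow> 'r \<Rightarrow> 'r set) \<Rightarrow>
   ('m \<Rightarrow> 'm \<Rightarrow> 'm set) \<Rightarrow> ('r \<Rightarrow> 'm \<Rightarrow> 'm set) \<Rightarrow> 'm \<Rightarrow> 'm set" where
  "eps_class addR mulR addM smul x = {y. eps_star addR mulR addM smul x y}"

definition fund_module ::
  "('r \<Rightarrow> 'r \<Rightarrow> 'r set) \<Rightarrow> ('r \<Rightarrow> 'r \<Rightarrow> 'r set) \<Rightarrow>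
   ('m \<Rightarrow> 'm \<Rightarrow> 'm set) \<Rightarrow> ('r \<Rightarrow> 'm \<Rightarrow> 'm set) \<Rightarrow> 'm set set" where
  "fund_module addR mulR addM smul = range (eps_class addR mulR addM smul)"

definition fadd ::
  "('r \<Rightarrow> 'r \<Rightarrow> 'r set) \<Rightarrow> ('r \<Rightarrow> 'r \<Rightarrow> 'r set) \<Rightarrow>
   ('m \<Rightarrow> 'm \<Rightarrow> 'm set) \<Rightarrow> ('r \<Rightarrow> 'm \<Rightarrow> 'm set) \<Rightarrow> 'm set \<Rightarrow> 'm set \<Rightarrow> 'm set" where
  "fadd addR mulR addM smul X Y =
     eps_class addR mulR addM smul (SOME c. c \<in> setop addM X Y)"

definition fsmul ::
  "('r \<Rightarrow> 'r \<Rightarrow> 'r set) \<Rightarrow> ('r \<Rightarrow> 'r \<Rightarrow> 'r set) \<Rightarrow>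
   ('m \<Rightarrow> 'm \<Rightarrow> 'm set) \<Rightarrow> ('r \<Rightarrow> 'm \<Rightarrow> 'm set) \<Rightarrow> 'r set \<Rightarrow> 'm set \<Rightarrow> 'm set" where
  "fsmul addR mulR addM smul P X =
     eps_class addR mulR addM smul (SOME d. d \<in> setop smul P X)"

definition omega ::
  "('r \<Rightarrow> 'r \<Rightarrow> 'r set) \<Rightarrow> ('r \<Rightarrow> 'r \<Rightarrow> 'r set) \<Rightarrow>
   ('m \<Rightarrow> 'm \<Rightarrow> 'm set) \<Rightarrow> ('r \<Rightarrow> 'm \<Rightarrow> 'm set) \<Rightarrow> 'm set" where
  "omega addR mulR addM smul =
     (THE W. W \<in> fund_module addR mulR addM smul \<and>
        (\<forall>X\<in>fund_module addR mulR addM smul.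
           fadd addR mulR addM smul W X = X \<and> fadd addR mulR addM smul X W = X))"

definition fneg ::
  "('r \<Rightarrow> 'r \<Rightarrow> 'r set) \<Rightarrow> ('r \<Rightarrow> 'r \<Rightarrow> 'r set) \<Rightarrow>
   ('m \<Rightarrow> 'm \<Rightarrow> 'm set) \<Rightarrow> ('r \<Rightarrow> 'm \<Rightarrow> 'm set) \<Rightarrow> 'm set \<Rightarrow> 'm set" where
  "fneg addR mulR addM smul X =
     (THE Y. Y \<in> fund_module addR mulR addM smul \<and>
        fadd addR mulR addM smul X Y = omega addR mulR addM smul)"

definition fsub ::
  "('r \<Rightarrow> 'r \<Rightarrow> 'r set) \<Rightarrow> ('r \<Rightarrow> 'r \<Rightarrow> 'r set) \<Rightarrow>
   ('m \<Rightarrow> 'm \<Rightarrow> 'm set) \<Rightarrow> ('r \<Rightarrow> 'm \<Rightarrow> 'm set) \<Rightarrow> 'm set \<Rightarrow> 'm set \<Rightarrow> 'm set" where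
  "fsub addR mulR addM smul X Y =
     fadd addR mulR addM smul X (fneg addR mulR addM smul Y)"

text \<open>An interval [a^-,a^+] is represented by the pair (a^-, a^+).\<close>
definition interval01 :: "real \<times> real \<Rightarrow> bool" where
  "interval01 a \<longleftrightarrow> 0 \<le> fst a \<and> fst a \<le> snd a \<and> snd a \<le> 1"

definition ivle :: "real \<times> real \<Rightarrow> real \<times> real \<Rightarrow> bool" where
  "ivle a b \<longleftrightarrow> fst a \<le> fst b \<and> snd a \<le> snd b"

definition ivInf :: "(real \<times> real) set \<Rightarrow> real \<times> real" where
  "ivInf S = (Inf (fst ` S), Inf (snd ` S))"

definition ivSup :: "(real \<times> real) set \<Rightarrow> real \<times> real" where
  "ivSup S = (Sup (fst ` S), Sup (snd ` S))"

definition norm_basic :: "(real \<Rightarrow> real \<Rightarrow> real) \<Rightarrow> bool" where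
  "norm_basic d \<longleftrightarrow>
     (\<forall>x\<in>{0..1}. \<forall>y\<in>{0..1}. d x y \<in> {0..1}) \<and>
     (\<forall>x\<in>{0..1}. \<forall>y\<in>{0..1}. d x y = d y x) \<and>
     (\<forall>x\<in>{0..1}. \<forall>y\<in>{0..1}. \<forall>z\<in>{0..1}. d x (d y z) = d (d x y) z) \<and>
     (\<forall>x\<in>{0..1}. d x x = x) \<and>
     (\<forall>x\<in>{0..1}. \<forall>y\<in>{0..1}. \<forall>x'\<in>{0..1}. \<forall>y'\<in>{0..1}.
        x \<le> x' \<longrightarrow> y \<le> y' \<longrightarrow> d x y \<le> d x' y')"

definition idem_tnorm :: "(real \<Rightarrow> real \<Rightarrow> real) \<Rightarrow> bool" where
  "idem_tnorm d \<longleftrightarrow> norm_basic d \<and> (\<forall>x\<in>{0..1}. d x 1 = x)"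

definition idem_snorm :: "(real \<Rightarrow> real \<Rightarrow> real) \<Rightarrow> bool" where
  "idem_snorm d \<longleftrightarrow> norm_basic d \<and> d 1 1 = 1 \<and> (\<forall>x\<in>{0..1}. d x 0 = x)"

definition ivnorm :: "(real \<Rightarrow> real \<Rightarrow> real) \<Rightarrow> real \<times> real \<Rightarrow> real \<times> real \<Rightarrow> real \<times> real" where
  "ivnorm d a b = (d (fst a) (fst b), d (snd a) (snd b))"

definition ivifs :: "'a set \<Rightarrow> ('a \<Rightarrow> real \<times> real) \<Rightarrow> ('a \<Rightarrow> real \<times> real) \<Rightarrow> bool" where
  "ivifs X MA NA \<longleftrightarrow>
     (\<forall>x\<in>X. interval01 (MA x) \<and> interval01 (NA x) \<and> snd (MA x) + snd (NA x) \<le> 1)"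

definition ivi_fuzzy_hv_submodule ::
  "(real \<Rightarrow> real \<Rightarrow> real) \<Rightarrow> (real \<Rightarrow> real \<Rightarrow> real) \<Rightarrow>
   ('m \<Rightarrow> 'm \<Rightarrow> 'm set) \<Rightarrow> ('r \<Rightarrow> 'm \<Rightarrow> 'm set) \<Rightarrow>
   ('m \<Rightarrow> real \<times> real) \<Rightarrow> ('m \<Rightarrow> real \<times> real) \<Rightarrow> bool" where
  "ivi_fuzzy_hv_submodule s t addM smul MA NA \<longleftrightarrow>
     ivifs UNIV MA NA \<and>
     (\<forall>x y. ivle (ivnorm t (MA x) (MA y)) (ivInf (MA ` addM x y)) \<and>
            ivle (ivSup (NA ` addM x y)) (ivnorm s (NA x) (NA y))) \<and>
     (\<forall>x a. \<exists>y. x \<in> addM a y \<and> ivle (ivnorm t (MA x) (MA a)) (MA y) \<and>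
            ivle (NA y) (ivnorm s (NA x) (NA a))) \<and>
     (\<forall>x a. \<exists>z. x \<in> addM z a \<and> ivle (ivnorm t (MA x) (MA a)) (MA z) \<and>
            ivle (NA z) (ivnorm s (NA x) (NA a))) \<and>
     (\<forall>x r. ivle (MA x) (ivInf (MA ` smul r x)) \<and> ivle (ivSup (NA ` smul r x)) (NA x))"

section \<open>The fuzzy set A/eps* on M/eps*\<close>

definition quot_M ::
  "('r \<Rightarrow> 'r \<Rightarrow> 'r set) \<Rightarrow> ('r \<Rightarrow> 'r \<Rightarrow> 'r set) \<Rightarrow>
   ('m \<Rightarrow> 'm \<Rightarrow> 'm set) \<Rightarrow> ('r \<Rightarrow> 'm \<Rightarrow> 'm set) \<Rightarrow> ('m \<Rightarrow> real \<times> real) \<Rightarrow> 'm set \<Rightarrow> real \<times> real" where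
  "quot_M addR mulR addM smul MA X =
     (if X = omega addR mulR addM smul then (1, 1) else ivSup (MA ` X))"

definition quot_N ::
  "('r \<Rightarrow> 'r \<Rightarrow> 'r set) \<Rightarrow> ('r \<Rightarrow> 'r \<Rightarrow> 'r set) \<Rightarrow>
   ('m \<Rightarrow> 'm \<Rightarrow> 'm set) \<Rightarrow> ('r \<Rightarrow> 'm \<Rightarrow> 'm set) \<Rightarrow> ('m \<Rightarrow> real \<times> real) \<Rightarrow> 'm set \<Rightarrow> real \<times> real" where
  "quot_N addR mulR addM smul NA X =
     (if X = omega addR mulR addM smul then (0, 0) else ivInf (NA ` X))"

definition ivi_fuzzy_fund_submodule ::
  "(real \<Rightarrow> real \<Rightarrow> real) \<Rightarrow> (real \<Rightarrow> real \<Rightarrow> real) \<Rightarrow>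
   ('r \<Rightarrow> 'r \<Rightarrow> 'r set) \<Rightarrow> ('r \<Rightarrow> 'r \<Rightarrow> 'r set) \<Rightarrow>
   ('m \<Rightarrow> 'm \<Rightarrow> 'm set) \<Rightarrow> ('r \<Rightarrow> 'm \<Rightarrow> 'm set) \<Rightarrow>
   ('m set \<Rightarrow> real \<times> real) \<Rightarrow> ('m set \<Rightarrow> real \<times> real) \<Rightarrow> bool" where
  "ivi_fuzzy_fund_submodule s t addR mulR addM smul MQ NQ \<longleftrightarrow>
     (let Mq = fund_module addR mulR addM smul; Rq = fund_ring addR mulR;
          z = omega addR mulR addM smul in
     ivifs Mq MQ NQ \<and>
     MQ z = (1, 1) \<and> NQ z = (0, 0) \<and>
     (\<forall>X\<in>Mq. \<forall>Y\<in>Mq.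
        ivle (ivnorm t (MQ X) (MQ Y)) (MQ (fsub addR mulR addM smul X Y)) \<and>
        ivle (NQ (fsub addR mulR addM smul X Y)) (ivnorm s (NQ X) (NQ Y))) \<and>
     (\<forall>X\<in>Mq. \<forall>P\<in>Rq.
        ivle (MQ X) (MQ (fsmul addR mulR addM smul P X)) \<and>
        ivle (NQ (fsmul addR mulR addM smul P X)) (NQ X)))"

end

theory Submission
  imports Defs
begin

(* Because eps* is compatible with every hyperoperation, the operations of M/eps* can be
   computed on arbitrary representatives, M/eps* is an abelian group, and
   eps*(x) - eps*(y) = eps*(z) whenever x \<in> y + z.  Idempotent norms on [0,1] are min and
   max.  For classes X, Y and x \<in> X, y \<in> Y, the reproducibility axiom (2) of A yields z
   with x \<in> y + z, hence z \<in> X - Y, and min(M x, M y) \<le> M z; taking suprema gives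
   min(M X, M Y) \<le> M(X - Y), and the same argument works for scalar multiples by (4).
   Non-membership reduces to membership through g \<mapsto> 1 - g, which turns infima into
   suprema and max into min. *)

section \<open>Idempotent norms and interval bounds\<close>

lemma idem_tnorm_eq_min:
  assumes "idem_tnorm t" and "x \<in> {0..1}" and "y \<in> {0..1}"
  shows "t x y = min x y"
proof -
  have unit: "\<And>a. a \<in> {0..1} \<Longrightarrow> t a 1 = a"
    and idem: "\<And>a. a \<in> {0..1} \<Longrightarrow> t a a = a"
    and comm: "\<And>a b. a \<in> {0..1} \<Longrightarrow> b \<in> {0..1} \<Longrightarrow> t a b = t b a"
    and mono: "\<And>a b a' b'. \<lbrakk>a \<in> {0..1}; b \<in> {0..1}; a' \<in> {0..1}; b' \<in> {0..1};
                 a \<le> a'; b \<le> b'\<rbrakk> \<Longrightarrow> t a b \<le> t a' b'"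
    using assms(1) unfolding idem_tnorm_def norm_basic_def by blast+
  have "t a b = a" if "a \<le> b" "a \<in> {0..1}" "b \<in> {0..1}" for a b
  proof (rule antisym)
    show "t a b \<le> a" using mono[of a b a 1] unit[of a] that by auto
    show "a \<le> t a b" using mono[of a a a b] idem[of a] that by auto
  qed
  then show ?thesis
    using comm[of x y] assms(2,3) by (cases "x \<le> y") (auto simp: min_def)
qed

lemma idem_snorm_eq_max:
  assumes "idem_snorm s" and "x \<in> {0..1}" and "y \<in> {0..1}"
  shows "s x y = max x y"
proof -
  have unit: "\<And>a. a \<in> {0..1} \<Longrightarrow> s a 0 = a"
    and idem: "\<And>a. a \<in> {0..1} \<Longrightarrow> s a a = a"
    and comm: "\<And>a b. a \<in> {0..1} \<Longrightarrow> b \<in> {0..1} \<Longrightarrow> s a b = s b a"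
    and mono: "\<And>a b a' b'. \<lbrakk>a \<in> {0..1}; b \<in> {0..1}; a' \<in> {0..1}; b' \<in> {0..1};
                 a \<le> a'; b \<le> b'\<rbrakk> \<Longrightarrow> s a b \<le> s a' b'"
    using assms(1) unfolding idem_snorm_def norm_basic_def by blast+
  have "s a b = a" if "b \<le> a" "a \<in> {0..1}" "b \<in> {0..1}" for a b
  proof (rule antisym)
    show "s a b \<le> a" using mono[of a b a a] idem[of a] that by auto
    show "a \<le> s a b" using mono[of a 0 a b] unit[of a] that by auto
  qed
  then show ?thesis
    using comm[of x y] assms(2,3) by (cases "y \<le> x") (auto simp: max_def)
qed

lemma ivnorm_idem_tnorm:
  assumes "idem_tnorm t" and "interval01 a" and "interval01 b"
  shows "ivnorm t a b = (min (fst a) (fst b), min (snd a) (snd b))"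
  using assms by (simp add: ivnorm_def interval01_def idem_tnorm_eq_min)

lemma ivnorm_idem_snorm:
  assumes "idem_snorm s" and "interval01 a" and "interval01 b"
  shows "ivnorm s a b = (max (fst a) (fst b), max (snd a) (snd b))"
  using assms by (simp add: ivnorm_def interval01_def idem_snorm_eq_max)

lemma ivle_trans: "ivle a b \<Longrightarrow> ivle b c \<Longrightarrow> ivle a c"
  unfolding ivle_def by auto

lemma interval01_component:
  assumes "interval01 a" and "p = fst \<or> p = snd"
  shows "0 \<le> p a" and "p a \<le> 1"
  using assms by (auto simp: interval01_def)

lemma ivInf_lower:
  assumes "\<And>x. interval01 (h x)" and "d \<in> S"
  shows "ivle (ivInf (h ` S)) (h d)"
proof -
  have "bdd_below ((p \<circ> h) ` S)" if "p = fst \<or> p = snd" for p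
    using interval01_component(1)[OF assms(1) that] by (intro bdd_belowI2) simp
  then show ?thesis
    using assms(2) by (auto simp: ivle_def ivInf_def image_comp intro!: cINF_lower)
qed

lemma ivSup_upper:
  assumes "\<And>x. interval01 (h x)" and "d \<in> S"
  shows "ivle (h d) (ivSup (h ` S))"
proof -
  have "bdd_above ((p \<circ> h) ` S)" if "p = fst \<or> p = snd" for p
    using interval01_component(2)[OF assms(1) that] by (intro bdd_aboveI2) simp
  then show ?thesis
    using assms(2) by (auto simp: ivle_def ivSup_def image_comp intro!: cSUP_upper)
qed

lemma min_cSup_le_cSup:
  fixes A B C :: "'a::conditionally_complete_linorder set"
  assumes "A \<noteq> {}" and "B \<noteq> {}" and "bdd_above C"
    and "\<And>a b. a \<in> A \<Longrightarrow> b \<in> B \<Longrightarrow> \<exists>c\<in>C. min a b \<le> c"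
  shows "min (Sup A) (Sup B) \<le> Sup C"
proof (rule ccontr)
  assume "\<not> ?thesis"
  then have "Sup C < Sup A" and "Sup C < Sup B" by (simp_all add: not_le)
  then obtain a b where "a \<in> A" "Sup C < a" "b \<in> B" "Sup C < b"
    using less_cSupD assms(1,2) by metis
  moreover obtain c where "c \<in> C" "min a b \<le> c" using assms(4) calculation by blast
  ultimately show False
    using cSup_upper[OF _ assms(3)] by (metis min_less_iff_conj not_le order_trans)
qed

lemma cINF_eq_minus_cSUP:
  fixes g :: "'a \<Rightarrow> real"
  assumes "S \<noteq> {}" and "bdd_below (g ` S)"
  shows "Inf (g ` S) = c - Sup ((\<lambda>x. c - g x) ` S)"
proof (rule antisym)
  have bdd: "bdd_above ((\<lambda>x. c - g x) ` S)"
    using assms(2) unfolding bdd_above_def bdd_below_def by (force intro: diff_left_mono)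
  have "Sup ((\<lambda>x. c - g x) ` S) \<le> c - Inf (g ` S)"
    using cINF_lower[OF assms(2)] by (auto intro!: cSUP_least assms(1))
  then show "Inf (g ` S) \<le> c - Sup ((\<lambda>x. c - g x) ` S)" by linarith
  have "c - Sup ((\<lambda>x. c - g x) ` S) \<le> g x" if "x \<in> S" for x
    using cSUP_upper[OF that bdd] by linarith
  then show "c - Sup ((\<lambda>x. c - g x) ` S) \<le> Inf (g ` S)" by (rule cINF_greatest[OF assms(1)])
qed

lemma setop_singleton: "setop f {a} {b} = f a b"
  unfolding setop_def by simp

section \<open>The fundamental module\<close>

locale fundamental_module =
  fixes addR mulR :: "'r \<Rightarrow> 'r \<Rightarrow> 'r set"
    and addM :: "'m \<Rightarrow> 'm \<Rightarrow> 'm set"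
    and smul :: "'r \<Rightarrow> 'm \<Rightarrow> 'm set"
  assumes hv_module: "hv_module addR mulR addM smul"
begin

abbreviation "mexps \<equiv> mexp addR mulR addM smul"
abbreviation "eps \<equiv> eps_star addR mulR addM smul"
abbreviation "cls \<equiv> eps_class addR mulR addM smul"
abbreviation "gcls \<equiv> gamma_class addR mulR"
abbreviation "Mq \<equiv> fund_module addR mulR addM smul"
abbreviation "Rq \<equiv> fund_ring addR mulR"
abbreviation "\<omega> \<equiv> omega addR mulR addM smul"
abbreviation fadd_syntax (infixl "\<oplus>" 65) where "X \<oplus> Y \<equiv> fadd addR mulR addM smul X Y"
abbreviation fsub_syntax (infixl "\<ominus>" 65) where "X \<ominus> Y \<equiv> fsub addR mulR addM smul X Y"
abbreviation fsmul_syntax (infixr "\<odot>" 70) where "P \<odot> X \<equiv> fsmul addR mulR addM smul P X"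

lemma addM_nonempty: "addM x y \<noteq> {}"
  using hv_module unfolding hv_module_def hv_group_def hv_semigroup_def hyperop_def by blast

lemma smul_nonempty: "smul r x \<noteq> {}"
  using hv_module unfolding hv_module_def hyperop_def by blast

lemma addM_reproductive: "\<exists>z. x \<in> addM y z"
proof -
  have "x \<in> setop addM {y} UNIV" using hv_module unfolding hv_module_def hv_group_def by blast
  then show ?thesis unfolding setop_def by blast
qed

lemma eps_refl: "eps x x"
  unfolding eps_star_def by simp

lemma eps_trans: "eps x y \<Longrightarrow> eps y z \<Longrightarrow> eps x z"
  unfolding eps_star_def by (rule rtranclp_trans)

lemma eps_sym: "eps x y \<Longrightarrow> eps y x"
proof -
  have "symp (eps_rel addR mulR addM smul)" unfolding eps_rel_def symp_def by blast
  then show "eps x y \<Longrightarrow> eps y x" unfolding eps_star_def by (meson sympD symp_rtranclp)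
qed

lemma eps_if_mexp: "u \<in> mexps \<Longrightarrow> x \<in> u \<Longrightarrow> y \<in> u \<Longrightarrow> eps x y"
  unfolding eps_star_def eps_rel_def by (rule r_into_rtranclp) blast

lemma mem_cls_iff: "y \<in> cls x \<longleftrightarrow> eps x y"
  unfolding eps_class_def by simp

lemma mem_cls: "x \<in> cls x"
  by (simp add: mem_cls_iff eps_refl)

lemma cls_eq_iff: "cls x = cls y \<longleftrightarrow> eps x y"
  unfolding eps_class_def using eps_refl eps_sym eps_trans by blast

lemma fund_module_iff: "X \<in> Mq \<longleftrightarrow> (\<exists>x. X = cls x)"
  unfolding fund_module_def by auto

lemma fund_module_nonempty: "X \<in> Mq \<Longrightarrow> X \<noteq> {}"
  using fund_module_iff mem_cls by blast

lemma fund_module_eq_cls: "X \<in> Mq \<Longrightarrow> x \<in> X \<Longrightarrow> X = cls x"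
  by (metis fund_module_iff mem_cls_iff cls_eq_iff)

lemma fund_ring_iff: "P \<in> Rq \<longleftrightarrow> (\<exists>r. P = gcls r)"
  unfolding fund_ring_def by auto

lemma mem_gcls: "r \<in> gcls r"
  unfolding gamma_class_def gamma_star_def by simp

lemma eps_lift_rtranclp:
  assumes "R\<^sup>*\<^sup>* a b" and "c \<in> g a" and "c' \<in> g b"
    and "\<And>a. g a \<noteq> {}" and "\<And>a. g a \<in> mexps"
    and "\<And>a b. R a b \<Longrightarrow> \<exists>u\<in>mexps. g a \<union> g b \<subseteq> u"
  shows "eps c c'"
  using assms(1,3)
proof (induction arbitrary: c' rule: rtranclp_induct)
  case base
  then show ?case using assms(2,5) eps_if_mexp by blast
next
  case (step b b')
  obtain c1 where c1: "c1 \<in> g b" using assms(4) by blast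
  obtain u where "u \<in> mexps" "g b \<union> g b' \<subseteq> u" using assms(6) step.hyps(2) by blast
  then have "eps c1 c'" using c1 step.prems eps_if_mexp by blast
  then show ?case using step.IH[OF c1] eps_trans by blast
qed

lemma addM_in_mexps: "addM a b \<in> mexps"
  by (metis setop_singleton mexp.mexp_add mexp.mexp_single)

lemma addM_cong:
  assumes "eps x x'" and "eps y y'" and "c \<in> addM x y" and "c' \<in> addM x' y'"
  shows "eps c c'"
proof -
  obtain c1 where c1: "c1 \<in> addM x' y" using addM_nonempty by blast
  have "eps c c1"
  proof (rule eps_lift_rtranclp[where g = "\<lambda>a. addM a y"])
    show "(eps_rel addR mulR addM smul)\<^sup>*\<^sup>* x x'" using assms(1) unfolding eps_star_def .
    show "\<exists>u\<in>mexps. addM a y \<union> addM b y \<subseteq> u" if "eps_rel addR mulR addM smul a b" for a b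
      using that unfolding eps_rel_def
      by (auto intro!: bexI[of _ "setop addM _ {y}"] mexp.mexp_add mexp.mexp_single simp: setop_def)
  qed (use assms(3) c1 addM_nonempty addM_in_mexps in auto)
  moreover have "eps c1 c'"
  proof (rule eps_lift_rtranclp[where g = "\<lambda>b. addM x' b"])
    show "(eps_rel addR mulR addM smul)\<^sup>*\<^sup>* y y'" using assms(2) unfolding eps_star_def .
    show "\<exists>u\<in>mexps. addM x' a \<union> addM x' b \<subseteq> u" if "eps_rel addR mulR addM smul a b" for a b
      using that unfolding eps_rel_def
      by (auto intro!: bexI[of _ "setop addM {x'} _"] mexp.mexp_add mexp.mexp_single simp: setop_def)
  qed (use assms(4) c1 addM_nonempty addM_in_mexps in auto)
  ultimately show ?thesis by (rule eps_trans)
qed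

lemma smul_in_mexps: "smul r a \<in> mexps"
  by (metis setop_singleton mexp.mexp_smul mexp.mexp_single rexp.rexp_single)

lemma smul_cong:
  assumes "gamma_star addR mulR r r'" and "eps x x'" and "d \<in> smul r x" and "d' \<in> smul r' x'"
  shows "eps d d'"
proof -
  obtain d1 where d1: "d1 \<in> smul r' x" using smul_nonempty by blast
  have "eps d d1"
  proof (rule eps_lift_rtranclp[where g = "\<lambda>a. smul a x"])
    show "(gamma_rel addR mulR)\<^sup>*\<^sup>* r r'" using assms(1) unfolding gamma_star_def .
    show "\<exists>u\<in>mexps. smul a x \<union> smul b x \<subseteq> u" if "gamma_rel addR mulR a b" for a b
      using that unfolding gamma_rel_def
      by (auto intro!: bexI[of _ "setop smul _ {x}"] mexp.mexp_smul mexp.mexp_single simp: setop_def)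
  qed (use assms(3) d1 smul_nonempty smul_in_mexps in auto)
  moreover have "eps d1 d'"
  proof (rule eps_lift_rtranclp[where g = "\<lambda>b. smul r' b"])
    show "(eps_rel addR mulR addM smul)\<^sup>*\<^sup>* x x'" using assms(2) unfolding eps_star_def .
    show "\<exists>u\<in>mexps. smul r' a \<union> smul r' b \<subseteq> u" if "eps_rel addR mulR addM smul a b" for a b
      using that unfolding eps_rel_def
      by (auto intro!: bexI[of _ "setop smul {r'} _"] mexp.mexp_smul rexp.rexp_single simp: setop_def)
  qed (use assms(4) d1 smul_nonempty smul_in_mexps in auto)
  ultimately show ?thesis by (rule eps_trans)
qed

lemma cls_some_eq:
  assumes "c \<in> S" and "\<And>d. d \<in> S \<Longrightarrow> eps c d"
  shows "cls (SOME d. d \<in> S) = cls c"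
  using assms(2)[OF someI[of "\<lambda>d. d \<in> S", OF assms(1)]] by (simp add: cls_eq_iff eps_sym)

lemma fadd_cls:
  assumes "c \<in> addM x y"
  shows "cls x \<oplus> cls y = cls c"
  unfolding fadd_def
proof (rule cls_some_eq)
  show "c \<in> setop addM (cls x) (cls y)" using assms mem_cls unfolding setop_def by blast
  show "eps c d" if "d \<in> setop addM (cls x) (cls y)" for d
    using that assms by (auto simp: setop_def mem_cls_iff intro: addM_cong)
qed

lemma fsmul_cls:
  assumes "d \<in> smul r x"
  shows "gcls r \<odot> cls x = cls d"
  unfolding fsmul_def
proof (rule cls_some_eq)
  show "d \<in> setop smul (gcls r) (cls x)" using assms mem_cls mem_gcls unfolding setop_def by blast
  show "eps d d'" if "d' \<in> setop smul (gcls r) (cls x)" for d'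
    using that assms by (auto simp: setop_def mem_cls_iff gamma_class_def intro: smul_cong)
qed

lemma fadd_solvable: "\<exists>z. cls y \<oplus> cls z = cls x"
  using addM_reproductive fadd_cls by blast

lemma fadd_comm: "cls x \<oplus> cls y = cls y \<oplus> cls x"
proof -
  obtain c where "c \<in> addM x y" "c \<in> addM y x"
    using hv_module unfolding hv_module_def weak_comm_def by blast
  then show ?thesis by (simp add: fadd_cls)
qed

lemma fadd_assoc: "cls x \<oplus> cls y \<oplus> cls z = cls x \<oplus> (cls y \<oplus> cls z)"
proof -
  obtain e where "e \<in> setop addM {x} (addM y z)" "e \<in> setop addM (addM x y) {z}"
    using hv_module unfolding hv_module_def hv_group_def hv_semigroup_def by blast
  then obtain c d where "c \<in> addM y z" "e \<in> addM x c" "d \<in> addM x y" "e \<in> addM d z"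
    unfolding setop_def by blast
  then show ?thesis by (simp add: fadd_cls)
qed

lemma fadd_neutral:
  assumes "cls a \<oplus> cls z = cls a"
  shows "cls y \<oplus> cls z = cls y"
proof -
  obtain v where v: "cls a \<oplus> cls v = cls y" using fadd_solvable by blast
  have "cls y \<oplus> cls z = cls a \<oplus> (cls v \<oplus> cls z)" using v fadd_assoc[of a v z] by simp
  also have "\<dots> = cls a \<oplus> cls z \<oplus> cls v" using fadd_assoc[of a z v] fadd_comm[of v z] by simp
  finally show ?thesis using assms v by simp
qed

lemma omega_eq_cls:
  assumes "cls a \<oplus> cls z = cls a"
  shows "\<omega> = cls z"
  unfolding omega_def
proof (rule the_equality)
  show "cls z \<in> Mq \<and> (\<forall>X\<in>Mq. cls z \<oplus> X = X \<and> X \<oplus> cls z = X)"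
  proof (intro conjI ballI)
    show "cls z \<in> Mq" using fund_module_iff by blast
    fix X assume "X \<in> Mq"
    then obtain x where x: "X = cls x" using fund_module_iff by blast
    show "cls z \<oplus> X = X" "X \<oplus> cls z = X"
      using fadd_neutral[OF assms, of x] fadd_comm[of z x] x by simp_all
  qed
  show "W = cls z" if W: "W \<in> Mq \<and> (\<forall>X\<in>Mq. W \<oplus> X = X \<and> X \<oplus> W = X)" for W
  proof -
    obtain w where w: "W = cls w" using W fund_module_iff by auto
    have "cls z \<in> Mq" using fund_module_iff by blast
    then have "W \<oplus> cls z = cls z" using W by blast
    then show ?thesis using fadd_neutral[OF assms, of w] w by simp
  qed
qed

lemma cls_eq_omega: "y \<in> addM y z \<Longrightarrow> cls z = \<omega>"
  by (rule omega_eq_cls[symmetric]) (rule fadd_cls)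

lemma omega_ex_cls: "\<exists>z. \<omega> = cls z"
  using addM_reproductive cls_eq_omega by metis

lemma fadd_omega: "cls y \<oplus> \<omega> = cls y" "\<omega> \<oplus> cls y = cls y"
proof -
  obtain a z where az: "a \<in> addM a z" using addM_reproductive by blast
  then show "cls y \<oplus> \<omega> = cls y"
    using fadd_neutral[OF fadd_cls[OF az]] cls_eq_omega[OF az] by simp
  then show "\<omega> \<oplus> cls y = cls y"
    using cls_eq_omega[OF az] fadd_comm by metis
qed

lemma fadd_inverse: "\<exists>v. cls y \<oplus> cls v = \<omega>"
  using fadd_solvable omega_ex_cls by metis

lemma fadd_left_cancel:
  assumes "cls x \<oplus> cls y = cls x \<oplus> cls z"
  shows "cls y = cls z"
proof -
  obtain v where v: "cls x \<oplus> cls v = \<omega>" using fadd_inverse by blast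
  have "cls w = cls v \<oplus> (cls x \<oplus> cls w)" for w
    using v fadd_assoc[of v x w] fadd_comm[of v x] fadd_omega(2) by simp
  then show ?thesis using assms by metis
qed

lemma fneg_cls:
  assumes "cls y \<oplus> cls v = \<omega>"
  shows "fneg addR mulR addM smul (cls y) = cls v"
  unfolding fneg_def
proof (rule the_equality)
  show "cls v \<in> Mq \<and> cls y \<oplus> cls v = \<omega>" using assms fund_module_iff by blast
  show "W = cls v" if "W \<in> Mq \<and> cls y \<oplus> W = \<omega>" for W
    using that assms fadd_left_cancel fund_module_iff by metis
qed

lemma fsub_cls: "x \<in> addM y z \<Longrightarrow> cls x \<ominus> cls y = cls z"
proof -
  assume x: "x \<in> addM y z"
  obtain v where v: "cls y \<oplus> cls v = \<omega>" using fadd_inverse by blast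
  have "cls x \<ominus> cls y = cls y \<oplus> cls z \<oplus> cls v"
    unfolding fsub_def using fadd_cls[OF x] fneg_cls[OF v] by simp
  also have "\<dots> = cls z \<oplus> (cls y \<oplus> cls v)" using fadd_comm[of y z] fadd_assoc[of z y v] by simp
  finally show ?thesis using v fadd_omega(1) by simp
qed

lemma fsub_omega: "cls x \<ominus> \<omega> = cls x"
proof -
  obtain z where z: "\<omega> = cls z" using omega_ex_cls by blast
  obtain w where w: "x \<in> addM z w" using addM_reproductive by blast
  have "cls x = cls w" using fadd_cls[OF w] fadd_omega(2) z by simp
  then show ?thesis using fsub_cls[OF w] z by simp
qed

lemma fsub_in_fund_module: "X \<in> Mq \<Longrightarrow> Y \<in> Mq \<Longrightarrow> X \<ominus> Y \<in> Mq"
  using addM_reproductive fsub_cls fund_module_iff by metis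

text \<open>By weak distributivity \<open>X = gcls r \<odot> \<omega>\<close> satisfies \<open>X = X \<oplus> X\<close>,
  so \<open>X = \<omega>\<close> by cancellation.\<close>
lemma fsmul_omega: "gcls r \<odot> \<omega> = \<omega>"
proof -
  obtain z where z: "\<omega> = cls z" using omega_ex_cls by blast
  obtain e where "e \<in> setop smul {r} (addM z z)" "e \<in> setop addM (smul r z) (smul r z)"
    using hv_module unfolding hv_module_def by blast
  then obtain c d1 d2 where c: "c \<in> addM z z" "e \<in> smul r c"
    and d: "d1 \<in> smul r z" "d2 \<in> smul r z" "e \<in> addM d1 d2"
    unfolding setop_def by blast
  have "cls c = \<omega>" using fadd_cls[OF c(1)] fadd_omega(1)[of z] z by simp
  then have "gcls r \<odot> \<omega> = cls e" using fsmul_cls[OF c(2)] by simp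
  also have "cls e = cls d1 \<oplus> cls d2" using fadd_cls[OF d(3)] by simp
  finally have "cls d1 \<oplus> cls d1 = cls d1 \<oplus> \<omega>"
    using fsmul_cls[OF d(1)] fsmul_cls[OF d(2)] fadd_omega(1) z by simp
  then show ?thesis using fadd_left_cancel[of d1 d1 z] fsmul_cls[OF d(1)] z by simp
qed

lemma fsmul_in_fund_module: "X \<in> Mq \<Longrightarrow> P \<in> Rq \<Longrightarrow> P \<odot> X \<in> Mq"
  using smul_nonempty fsmul_cls fund_module_iff fund_ring_iff by (metis ex_in_conv)

section \<open>The quotient fuzzy set\<close>

definition class_sup :: "('m \<Rightarrow> real) \<Rightarrow> 'm set \<Rightarrow> real" where
  "class_sup f X = (if X = \<omega> then 1 else Sup (f ` X))"

definition class_inf :: "('m \<Rightarrow> real) \<Rightarrow> 'm set \<Rightarrow> real" where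
  "class_inf g X = (if X = \<omega> then 0 else Inf (g ` X))"

lemma quot_M_eq: "quot_M addR mulR addM smul MA X = (class_sup (fst \<circ> MA) X, class_sup (snd \<circ> MA) X)"
  by (simp add: quot_M_def class_sup_def ivSup_def image_comp)

lemma quot_N_eq: "quot_N addR mulR addM smul NA X = (class_inf (fst \<circ> NA) X, class_inf (snd \<circ> NA) X)"
  by (simp add: quot_N_def class_inf_def ivInf_def image_comp)

lemma class_sup_upper:
  assumes "x \<in> X" and "X \<noteq> \<omega>" and "\<And>x. f x \<le> 1"
  shows "f x \<le> class_sup f X"
proof -
  have "bdd_above (f ` X)" using assms(3) by (rule bdd_aboveI2)
  then show ?thesis using assms(1,2) by (simp add: class_sup_def cSUP_upper)
qed

lemma class_sup_le_one:
  assumes "X \<in> Mq" and "\<And>x. f x \<le> 1"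
  shows "class_sup f X \<le> 1"
  using assms by (simp add: class_sup_def cSUP_least fund_module_nonempty)

lemma class_sup_nonneg:
  assumes "X \<in> Mq" and "\<And>x. 0 \<le> f x" and "\<And>x. f x \<le> 1"
  shows "0 \<le> class_sup f X"
proof (cases "X = \<omega>")
  case False
  obtain x where "x \<in> X" using fund_module_nonempty[OF assms(1)] by blast
  then show ?thesis using class_sup_upper[of x X f] False assms(2,3) order_trans by blast
qed (simp add: class_sup_def)

lemma class_sup_mono:
  assumes "X \<in> Mq" and "\<And>x. f x \<le> f' x" and "\<And>x. f' x \<le> 1"
  shows "class_sup f X \<le> class_sup f' X"
proof (cases "X = \<omega>")
  case False
  then have "f x \<le> class_sup f' X" if "x \<in> X" for x
    using class_sup_upper[OF that False] assms(2,3) order_trans by blast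
  then show ?thesis
    using False fund_module_nonempty[OF assms(1)] by (simp add: class_sup_def cSUP_least)
qed (simp add: class_sup_def)

lemma fsub_witness:
  assumes "\<And>x a. \<exists>y. x \<in> addM a y \<and> min (f x) (f a) \<le> f y"
    and "X \<in> Mq" and "Y \<in> Mq" and "x \<in> X" and "y \<in> Y"
  shows "\<exists>z\<in>X \<ominus> Y. min (f x) (f y) \<le> f z"
proof -
  obtain z where z: "x \<in> addM y z" "min (f x) (f y) \<le> f z" using assms(1) by blast
  have "X \<ominus> Y = cls z"
    using fsub_cls[OF z(1)] fund_module_eq_cls assms(2-5) by simp
  then show ?thesis using z(2) mem_cls by blast
qed

text \<open>For \<open>X = \<omega>\<close>, applying the reproducibility hypothesis to \<open>y \<in> y + y'\<close>
  yields \<open>y' \<in> \<omega>\<close> with \<open>f y \<le> f y'\<close>, so \<open>\<omega>\<close> contains an element at least as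
  large as any element of \<open>Y\<close>.\<close>
lemma class_sup_fsub:
  assumes le_one: "\<And>x. f x \<le> 1"
    and sub: "\<And>x a. \<exists>y. x \<in> addM a y \<and> min (f x) (f a) \<le> f y"
    and X: "X \<in> Mq" and Y: "Y \<in> Mq"
  shows "min (class_sup f X) (class_sup f Y) \<le> class_sup f (X \<ominus> Y)"
proof -
  have bdd: "bdd_above (f ` S)" for S using le_one by (rule bdd_aboveI2)
  consider "X \<ominus> Y = \<omega>" | "Y = \<omega>"
    | "X = \<omega>" "Y \<noteq> \<omega>" "X \<ominus> Y \<noteq> \<omega>"
    | "X \<noteq> \<omega>" "Y \<noteq> \<omega>" "X \<ominus> Y \<noteq> \<omega>"
    by blast
  then show ?thesis
  proof cases
    case 1
    then show ?thesis using class_sup_le_one[of X f] X le_one by (simp add: class_sup_def)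
  next
    case 2
    then have "X \<ominus> Y = X" using X fsub_omega fund_module_iff by metis
    then show ?thesis using 2 by (simp add: class_sup_def)
  next
    case 3
    have "Sup (f ` Y) \<le> Sup (f ` (X \<ominus> Y))"
    proof (rule cSup_mono)
      fix b assume "b \<in> f ` Y"
      then obtain y where y: "y \<in> Y" "b = f y" by blast
      obtain y' where y': "y \<in> addM y y'" "min (f y) (f y) \<le> f y'" using sub by blast
      have "y' \<in> X" using cls_eq_omega[OF y'(1)] mem_cls[of y'] 3(1) by simp
      then obtain z where "z \<in> X \<ominus> Y" "min (f y') (f y) \<le> f z"
        using fsub_witness[OF sub X Y _ y(1)] by blast
      then show "\<exists>a\<in>f ` (X \<ominus> Y). b \<le> a" using y y'(2) by auto
    qed (use fund_module_nonempty[OF Y] bdd in simp_all)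
    then show ?thesis using 3 by (simp add: class_sup_def)
  next
    case 4
    have "min (Sup (f ` X)) (Sup (f ` Y)) \<le> Sup (f ` (X \<ominus> Y))"
    proof (rule min_cSup_le_cSup)
      fix a b assume "a \<in> f ` X" "b \<in> f ` Y"
      then obtain x y where xy: "x \<in> X" "y \<in> Y" and "a = f x" "b = f y" by blast
      moreover obtain z where "z \<in> X \<ominus> Y" "min (f x) (f y) \<le> f z"
        using fsub_witness[OF sub X Y xy] by blast
      ultimately show "\<exists>c\<in>f ` (X \<ominus> Y). min a b \<le> c" by blast
    qed (use fund_module_nonempty[OF X] fund_module_nonempty[OF Y] bdd in simp_all)
    then show ?thesis using 4 by (simp add: class_sup_def)
  qed
qed

lemma class_sup_fsmul:
  assumes le_one: "\<And>x. f x \<le> 1"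
    and smul: "\<And>r x d. d \<in> smul r x \<Longrightarrow> f x \<le> f d"
    and X: "X \<in> Mq" and P: "P \<in> Rq"
  shows "class_sup f X \<le> class_sup f (P \<odot> X)"
proof (cases "P \<odot> X = \<omega>")
  case True
  then show ?thesis using class_sup_le_one[of X f] X le_one by (simp add: class_sup_def)
next
  case False
  obtain r where r: "P = gcls r" using P fund_ring_iff by blast
  then have "X \<noteq> \<omega>" using False fsmul_omega by blast
  have "f x \<le> class_sup f (P \<odot> X)" if x: "x \<in> X" for x
  proof -
    obtain d where d: "d \<in> smul r x" using smul_nonempty by blast
    then have "d \<in> P \<odot> X" using fsmul_cls[OF d] r fund_module_eq_cls[OF X x] mem_cls by simp
    then have "f d \<le> class_sup f (P \<odot> X)" by (rule class_sup_upper[OF _ False le_one])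
    then show ?thesis using smul[OF d] by linarith
  qed
  then show ?thesis
    using \<open>X \<noteq> \<omega>\<close> fund_module_nonempty[OF X] by (simp add: class_sup_def cSUP_least)
qed

lemma class_inf_eq_class_sup:
  assumes "X \<in> Mq" and "\<And>x. 0 \<le> g x"
  shows "class_inf g X = 1 - class_sup (\<lambda>x. 1 - g x) X"
proof -
  have "bdd_below (g ` X)" using assms(2) by (rule bdd_belowI2)
  then show ?thesis
    using cINF_eq_minus_cSUP[OF fund_module_nonempty[OF assms(1)]]
    by (simp add: class_inf_def class_sup_def)
qed

lemma class_inf_nonneg:
  assumes "X \<in> Mq" and "\<And>x. 0 \<le> g x"
  shows "0 \<le> class_inf g X"
  using class_sup_le_one[OF assms(1), of "\<lambda>x. 1 - g x"] assms
  by (simp add: class_inf_eq_class_sup)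

lemma class_inf_le_one:
  assumes "X \<in> Mq" and "\<And>x. 0 \<le> g x" and "\<And>x. g x \<le> 1"
  shows "class_inf g X \<le> 1"
  using class_sup_nonneg[OF assms(1), of "\<lambda>x. 1 - g x"] assms
  by (simp add: class_inf_eq_class_sup)

lemma class_inf_mono:
  assumes "X \<in> Mq" and "\<And>x. g x \<le> g' x" and "\<And>x. 0 \<le> g x"
  shows "class_inf g X \<le> class_inf g' X"
proof -
  have "class_sup (\<lambda>x. 1 - g' x) X \<le> class_sup (\<lambda>x. 1 - g x) X"
    by (rule class_sup_mono) (use assms in auto)
  moreover have "\<And>x. 0 \<le> g' x" using assms(2,3) order_trans by blast
  ultimately show ?thesis using assms by (simp add: class_inf_eq_class_sup)
qed

lemma class_sup_add_class_inf_le_one: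
  assumes "X \<in> Mq" and "\<And>x. f x + g x \<le> 1" and "\<And>x. 0 \<le> g x"
  shows "class_sup f X + class_inf g X \<le> 1"
proof -
  have "class_sup f X \<le> class_sup (\<lambda>x. 1 - g x) X"
    by (rule class_sup_mono) (use assms in \<open>auto simp: algebra_simps\<close>)
  then show ?thesis using assms by (simp add: class_inf_eq_class_sup)
qed

lemma class_inf_fsub:
  assumes ge0: "\<And>x. 0 \<le> g x"
    and sub: "\<And>x a. \<exists>y. x \<in> addM a y \<and> g y \<le> max (g x) (g a)"
    and X: "X \<in> Mq" and Y: "Y \<in> Mq"
  shows "class_inf g (X \<ominus> Y) \<le> max (class_inf g X) (class_inf g Y)"
proof -
  have "min (class_sup (\<lambda>x. 1 - g x) X) (class_sup (\<lambda>x. 1 - g x) Y)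
      \<le> class_sup (\<lambda>x. 1 - g x) (X \<ominus> Y)"
  proof (rule class_sup_fsub[OF _ _ X Y])
    show "1 - g x \<le> 1" for x using ge0[of x] by simp
    show "\<exists>y. x \<in> addM a y \<and> min (1 - g x) (1 - g a) \<le> 1 - g y" for x a
      using sub[of x a] by (auto simp: min_def max_def)
  qed
  then show ?thesis
    using X Y fsub_in_fund_module ge0 by (auto simp: class_inf_eq_class_sup)
qed

lemma class_inf_fsmul:
  assumes ge0: "\<And>x. 0 \<le> g x"
    and smul: "\<And>r x d. d \<in> smul r x \<Longrightarrow> g d \<le> g x"
    and X: "X \<in> Mq" and P: "P \<in> Rq"
  shows "class_inf g (P \<odot> X) \<le> class_inf g X"
proof -
  have "class_sup (\<lambda>x. 1 - g x) X \<le> class_sup (\<lambda>x. 1 - g x) (P \<odot> X)"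
    by (rule class_sup_fsmul[OF _ _ X P]) (use ge0 smul in force)+
  then show ?thesis
    using X P fsmul_in_fund_module ge0 by (simp add: class_inf_eq_class_sup)
qed

lemma interval01_quot_M:
  assumes iv: "\<And>x. interval01 (MA x)" and X: "X \<in> Mq"
  shows "interval01 (quot_M addR mulR addM smul MA X)"
proof -
  have "0 \<le> class_sup (fst \<circ> MA) X"
    using interval01_component[OF iv] by (intro class_sup_nonneg[OF X]) auto
  moreover have "class_sup (fst \<circ> MA) X \<le> class_sup (snd \<circ> MA) X"
    using iv interval01_component[OF iv] by (intro class_sup_mono[OF X]) (auto simp: interval01_def)
  moreover have "class_sup (snd \<circ> MA) X \<le> 1"
    using interval01_component[OF iv] by (intro class_sup_le_one[OF X]) auto
  ultimately show ?thesis by (simp add: interval01_def quot_M_eq)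
qed

lemma interval01_quot_N:
  assumes iv: "\<And>x. interval01 (NA x)" and X: "X \<in> Mq"
  shows "interval01 (quot_N addR mulR addM smul NA X)"
proof -
  have "0 \<le> class_inf (fst \<circ> NA) X"
    using interval01_component[OF iv] by (intro class_inf_nonneg[OF X]) auto
  moreover have "class_inf (fst \<circ> NA) X \<le> class_inf (snd \<circ> NA) X"
    using iv interval01_component[OF iv] by (intro class_inf_mono[OF X]) (auto simp: interval01_def)
  moreover have "class_inf (snd \<circ> NA) X \<le> 1"
    using interval01_component[OF iv] by (intro class_inf_le_one[OF X]) auto
  ultimately show ?thesis by (simp add: interval01_def quot_N_eq)
qed

lemma ivifs_quot:
  assumes "ivifs UNIV MA NA"
  shows "ivifs Mq (quot_M addR mulR addM smul MA) (quot_N addR mulR addM smul NA)"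
  unfolding ivifs_def
proof (intro ballI conjI)
  fix X assume X: "X \<in> Mq"
  have iv: "\<And>x. interval01 (MA x)" "\<And>x. interval01 (NA x)"
    and sum: "\<And>x. (snd \<circ> MA) x + (snd \<circ> NA) x \<le> 1"
    using assms unfolding ivifs_def by simp_all
  show "interval01 (quot_M addR mulR addM smul MA X)" by (rule interval01_quot_M[OF iv(1) X])
  show "interval01 (quot_N addR mulR addM smul NA X)" by (rule interval01_quot_N[OF iv(2) X])
  have "class_sup (snd \<circ> MA) X + class_inf (snd \<circ> NA) X \<le> 1"
    using interval01_component[OF iv(2)] by (intro class_sup_add_class_inf_le_one[OF X sum]) auto
  then show "snd (quot_M addR mulR addM smul MA X) + snd (quot_N addR mulR addM smul NA X) \<le> 1"
    by (simp add: quot_M_eq quot_N_eq)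
qed

lemma quot_M_fsub:
  assumes t: "idem_tnorm t" and iv: "\<And>x. interval01 (MA x)"
    and sub: "\<And>x a. \<exists>y. x \<in> addM a y \<and> ivle (ivnorm t (MA x) (MA a)) (MA y)"
    and X: "X \<in> Mq" and Y: "Y \<in> Mq"
  shows "ivle (ivnorm t (quot_M addR mulR addM smul MA X) (quot_M addR mulR addM smul MA Y))
              (quot_M addR mulR addM smul MA (X \<ominus> Y))"
proof -
  have "min (class_sup (p \<circ> MA) X) (class_sup (p \<circ> MA) Y) \<le> class_sup (p \<circ> MA) (X \<ominus> Y)"
    if p: "p = fst \<or> p = snd" for p
  proof (rule class_sup_fsub[OF _ _ X Y])
    show "(p \<circ> MA) x \<le> 1" for x using interval01_component(2)[OF iv p] by simp
    show "\<exists>y. x \<in> addM a y \<and> min ((p \<circ> MA) x) ((p \<circ> MA) a) \<le> (p \<circ> MA) y" for x a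
      using sub[of x a] p by (auto simp: ivnorm_idem_tnorm[OF t iv iv] ivle_def)
  qed
  then show ?thesis
    using ivnorm_idem_tnorm[OF t interval01_quot_M[OF iv X] interval01_quot_M[OF iv Y]]
    by (simp add: quot_M_eq ivle_def)
qed

lemma quot_N_fsub:
  assumes s: "idem_snorm s" and iv: "\<And>x. interval01 (NA x)"
    and sub: "\<And>x a. \<exists>y. x \<in> addM a y \<and> ivle (NA y) (ivnorm s (NA x) (NA a))"
    and X: "X \<in> Mq" and Y: "Y \<in> Mq"
  shows "ivle (quot_N addR mulR addM smul NA (X \<ominus> Y))
              (ivnorm s (quot_N addR mulR addM smul NA X) (quot_N addR mulR addM smul NA Y))"
proof -
  have "class_inf (p \<circ> NA) (X \<ominus> Y) \<le> max (class_inf (p \<circ> NA) X) (class_inf (p \<circ> NA) Y)"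
    if p: "p = fst \<or> p = snd" for p
  proof (rule class_inf_fsub[OF _ _ X Y])
    show "0 \<le> (p \<circ> NA) x" for x using interval01_component(1)[OF iv p] by simp
    show "\<exists>y. x \<in> addM a y \<and> (p \<circ> NA) y \<le> max ((p \<circ> NA) x) ((p \<circ> NA) a)" for x a
      using sub[of x a] p by (auto simp: ivnorm_idem_snorm[OF s iv iv] ivle_def)
  qed
  then show ?thesis
    using ivnorm_idem_snorm[OF s interval01_quot_N[OF iv X] interval01_quot_N[OF iv Y]]
    by (simp add: quot_N_eq ivle_def)
qed

lemma quot_M_fsmul:
  assumes iv: "\<And>x. interval01 (MA x)"
    and smul: "\<And>x r. ivle (MA x) (ivInf (MA ` smul r x))"
    and X: "X \<in> Mq" and P: "P \<in> Rq"
  shows "ivle (quot_M addR mulR addM smul MA X) (quot_M addR mulR addM smul MA (P \<odot> X))"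
proof -
  have "ivle (MA x) (MA d)" if "d \<in> smul r x" for r x d
    using smul[of x r] ivInf_lower[OF iv that] by (rule ivle_trans)
  then have "class_sup (p \<circ> MA) X \<le> class_sup (p \<circ> MA) (P \<odot> X)"
    if p: "p = fst \<or> p = snd" for p
    using interval01_component(2)[OF iv p] p
    by (intro class_sup_fsmul[OF _ _ X P]) (auto simp: ivle_def)
  then show ?thesis by (simp add: quot_M_eq ivle_def)
qed

lemma quot_N_fsmul:
  assumes iv: "\<And>x. interval01 (NA x)"
    and smul: "\<And>x r. ivle (ivSup (NA ` smul r x)) (NA x)"
    and X: "X \<in> Mq" and P: "P \<in> Rq"
  shows "ivle (quot_N addR mulR addM smul NA (P \<odot> X)) (quot_N addR mulR addM smul NA X)"
proof -
  have "ivle (NA d) (NA x)" if "d \<in> smul r x" for r x d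
    using ivSup_upper[OF iv that] smul[of r x] by (rule ivle_trans)
  then have "class_inf (p \<circ> NA) (P \<odot> X) \<le> class_inf (p \<circ> NA) X"
    if p: "p = fst \<or> p = snd" for p
    using interval01_component(1)[OF iv p] p
    by (intro class_inf_fsmul[OF _ _ X P]) (auto simp: ivle_def)
  then show ?thesis by (simp add: quot_N_eq ivle_def)
qed

end

theorem theorem3p9:
  fixes addR mulR :: "'r \<Rightarrow> 'r \<Rightarrow> 'r set"
    and addM :: "'m \<Rightarrow> 'm \<Rightarrow> 'm set"
    and smul :: "'r \<Rightarrow> 'm \<Rightarrow> 'm set"
    and t s :: "real \<Rightarrow> real \<Rightarrow> real"
    and MA NA :: "'m \<Rightarrow> real \<times> real"
  assumes "hv_module addR mulR addM smul"
    and "idem_tnorm t"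
    and "idem_snorm s"
    and "ivi_fuzzy_hv_submodule s t addM smul MA NA"
  shows "ivi_fuzzy_fund_submodule s t addR mulR addM smul
           (quot_M addR mulR addM smul MA) (quot_N addR mulR addM smul NA)"
proof -
  interpret fundamental_module addR mulR addM smul using assms(1) by unfold_locales
  have ivifs: "ivifs UNIV MA NA"
    and iv: "\<And>x. interval01 (MA x)" "\<And>x. interval01 (NA x)"
    and sub_M: "\<And>x a. \<exists>y. x \<in> addM a y \<and> ivle (ivnorm t (MA x) (MA a)) (MA y)"
    and sub_N: "\<And>x a. \<exists>y. x \<in> addM a y \<and> ivle (NA y) (ivnorm s (NA x) (NA a))"
    and smul_M: "\<And>x r. ivle (MA x) (ivInf (MA ` smul r x))"
    and smul_N: "\<And>x r. ivle (ivSup (NA ` smul r x)) (NA x)"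
    using assms(4) unfolding ivi_fuzzy_hv_submodule_def ivifs_def by blast+
  have "quot_M addR mulR addM smul MA \<omega> = (1, 1)" "quot_N addR mulR addM smul NA \<omega> = (0, 0)"
    by (simp_all add: quot_M_def quot_N_def)
  then show ?thesis
    unfolding ivi_fuzzy_fund_submodule_def Let_def
    using ivifs_quot[OF ivifs]
      quot_M_fsub[OF assms(2) iv(1) sub_M] quot_N_fsub[OF assms(3) iv(2) sub_N]
      quot_M_fsmul[OF iv(1) smul_M] quot_N_fsmul[OF iv(2) smul_N]
    by blast
qed

end
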